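(* There is a strictly monotone increasing unbounded sequence $\Lambda=(\lambda_0,\lambda_1,\ldots)$ of real numbers such that the gaps $\lambda_n-\lambda_{n-1}$ tend to $0$ monotone decreasingly (i.e. $\Lambda$ is a decreasing gap asymptotically dense set), with the following property: for every open set $G\subset\mathbb{R}$ there is a function $f_G:\mathbb{R}\to[0,+\infty)$ of the form $f_G=\chi_{U_G}$ for some closed set $U_G\subset\mathbb{R}$, such that \[ \mu\Big(\Big\{x\notin G : \sum_{n=0}^\infty f_G(x+\lambda_n)=\infty\Big\}\Big)=0 \quad\text{and}\quad \sum_{n=0}^\infty f_G(x+\lambda_n)=\infty \text{ for every } x\in G. \] In particular $D(f_G,\Lambda)\supset G$ and $C(f_G,\Lambda)=\mathbb{R}\setminus G$ modulo sets of Lebesgue measure zero. Moreover, for every open $G\subset\mathbb{R}$ one can also select a function $g_G\in C_0^+(\mathbb{R})$ satisfying the two displayed properties in place of $f_G$.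
   Context: $\mu$ denotes one-dimensional Lebesgue measure and $\chi_U$ the characteristic function of $U$. For a discrete set $\Lambda\subset\mathbb{R}$ and measurable $f:\mathbb{R}\to[0,+\infty)$, put $s(x)=\sum_{\lambda\in\Lambda}f(x+\lambda)$, $C(f,\Lambda)=\{x: s(x)<\infty\}$ and $D(f,\Lambda)=\{x: s(x)=\infty\}$. $C_0^+(\mathbb{R})$ denotes the set of continuous functions $\mathbb{R}\to[0,+\infty)$ that tend to $0$ at $+\infty$. *)

theory Defs
  imports "HOL-Analysis.Analysis"
begin

definition shift_sum :: "(real \<Rightarrow> real) \<Rightarrow> (nat \<Rightarrow> real) \<Rightarrow> real \<Rightarrow> ennreal" where
  "shift_sum f lam x = (\<Sum>n. ennreal (f (x + lam n)))"

definition good_for :: "(real \<Rightarrow> real) \<Rightarrow> (nat \<Rightarrow> real) \<Rightarrow> real set \<Rightarrow> bool" where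
  "good_for f lam G \<longleftrightarrow>
     {x. x \<notin> G \<and> shift_sum f lam x = \<infinity>} \<in> null_sets lebesgue \<and>
     (\<forall>x\<in>G. shift_sum f lam x = \<infinity>)"

end

theory Submission
  imports Defs "HOL-Real_Asymp.Real_Asymp"
begin

text \<open>The gaps of \<open>\<lambda>\<close> are constant on long stretches: block \<open>k\<close> consists of
  gaps \<open>(Q + 1) \<epsilon>\<close> followed by gaps \<open>Q \<epsilon>\<close>, where \<open>Q = 2^(3k+8)\<close> and
  \<open>\<epsilon>\<close> is tiny, and the gap length drops from block to block. As every
  \<open>s \<ge> Q (Q + 1)\<close> is of the form \<open>m Q + j (Q + 1)\<close> with \<open>m \<le> Q\<close>,
  going back \<open>j\<close> long steps from the end of the long stretch (the pivot) and forward \<open>m\<close>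
  short steps reaches every \<open>\<epsilon>\<close>-cell of a window of length \<open>2^-(k+2)\<close>.
  Hence, if \<open>U\<^sub>G\<close> collects, for all \<open>k\<close>, the \<open>\<epsilon>\<close>-cells at the points
  \<open>\<lambda>(pivot) + z 2^-(k+2) + m Q \<epsilon>\<close> for the grid points \<open>z 2^-(k+2)\<close> deep
  inside \<open>G\<close>, every \<open>x \<in> G\<close> has \<open>x + \<lambda>\<^sub>n \<in> U\<^sub>G\<close> for some
  \<open>n\<close> in every late block, and the sum diverges.

  Conversely, for \<open>x \<notin> G\<close> the translate \<open>x + \<lambda>\<^sub>n\<close> can come close to the
  \<open>k\<close>-th part of \<open>U\<^sub>G\<close> only if \<open>x\<close> is \<open>\<epsilon>\<close>-close to the
  progression \<open>Q \<epsilon> \<int>\<close> or to one of few translates coming from earlier blocks.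
  These exceptional sets have measure at most \<open>2^-(k+1)\<close>, so by Borel--Cantelli almost
  every \<open>x \<notin> G\<close> comes close to only finitely many parts.

  For the continuous function, a Urysohn function for \<open>U\<^sub>G\<close> inside a slightly larger
  open set is damped by \<open>1 / sqrt (1 + \<bar>y\<bar>)\<close>; it is still
  \<open>\<ge> 1 / (5 (k + 1))\<close> on the \<open>k\<close>-th part, which lies at distance
  \<open>O(k\<^sup>2)\<close> from the origin, and \<open>\<Sum> 1 / k\<close> diverges.\<close>

lemma divide_power2_le:
  fixes X :: real
  assumes "X \<le> 2 ^ a" "a + c \<le> b"
  shows "X / 2 ^ b \<le> 1 / 2 ^ c"
proof -
  obtain r where r: "b = a + c + r" using assms(2) le_Suc_ex by blast
  have "X / 2 ^ b \<le> 2 ^ a / 2 ^ b" using assms(1) by (simp add: divide_right_mono)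
  also have "\<dots> = 1 / (2 ^ c * 2 ^ r)" by (simp add: r power_add)
  also have "\<dots> \<le> 1 / 2 ^ c" by (simp add: frac_le)
  finally show ?thesis .
qed

lemma of_nat_Suc_le_power2: "real k + 1 \<le> 2 ^ k"
proof -
  have "k + 1 \<le> (2::nat) ^ k" using less_exp[of k] by (simp add: Suc_le_eq)
  then have "real (k + 1) \<le> real ((2::nat) ^ k)" by (simp only: of_nat_le_iff)
  then show ?thesis by simp
qed

lemma nat_ceiling_bounds:
  fixes x :: real
  assumes "x > 0"
  shows "x \<le> real (nat \<lceil>x\<rceil>)" "real (nat \<lceil>x\<rceil>) < x + 1" "1 \<le> nat \<lceil>x\<rceil>"
  using assms le_of_int_ceiling[of x] ceiling_correct[of x] by linarith+

lemma bounded_scaled_ints: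
  fixes c B :: real
  assumes c: "c > 0" and B: "B \<ge> 0"
  shows "finite {t::int. \<bar>of_int t\<bar> * c \<le> B}"
    and "real (card {t::int. \<bar>of_int t\<bar> * c \<le> B}) \<le> 2 * B / c + 1"
proof -
  define M where "M = \<lfloor>B / c\<rfloor>"
  have sub: "{t::int. \<bar>of_int t\<bar> * c \<le> B} \<subseteq> {-M..M}"
  proof
    fix t :: int
    assume "t \<in> {t::int. \<bar>of_int t\<bar> * c \<le> B}"
    then have "\<bar>of_int t\<bar> \<le> B / c" using c by (simp add: field_simps)
    then have "\<bar>t\<bar> \<le> M" unfolding M_def by (simp add: le_floor_iff)
    then show "t \<in> {-M..M}" by auto
  qed
  then show "finite {t::int. \<bar>of_int t\<bar> * c \<le> B}" using finite_subset by blast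
  have "card {t::int. \<bar>of_int t\<bar> * c \<le> B} \<le> card {-M..M}"
    using sub by (intro card_mono) auto
  moreover have "real (card {-M..M}) \<le> 2 * B / c + 1"
  proof -
    have "0 \<le> M" unfolding M_def using B c by simp
    moreover have "of_int M \<le> B / c" unfolding M_def by simp
    ultimately show ?thesis by simp
  qed
  ultimately show "real (card {t::int. \<bar>of_int t\<bar> * c \<le> B}) \<le> 2 * B / c + 1"
    by linarith
qed

lemma card_increasing_points_in_interval:
  fixes s :: "nat \<Rightarrow> real"
  assumes g: "g > 0" and gaps: "\<And>i. i < M \<Longrightarrow> g \<le> s (Suc i) - s i" and l: "0 \<le> l"
  shows "real (card {n. n < M \<and> a \<le> s n \<and> s n \<le> a + l}) \<le> l / g + 1"
proof -
  define S where "S = {n. n < M \<and> a \<le> s n \<and> s n \<le> a + l}"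
  have fin: "finite S" unfolding S_def by simp
  show ?thesis
  proof (cases "S = {}")
    case True
    then show ?thesis using l g by (simp add: S_def[symmetric])
  next
    case False
    define lo where "lo = Min S"
    define hi where "hi = Max S"
    have lo: "lo \<in> S" and hi: "hi \<in> S" using fin False by (auto simp: lo_def hi_def)
    have sub: "S \<subseteq> {lo..hi}" using fin by (auto simp: lo_def hi_def)
    then have lohi: "lo \<le> hi" using lo by auto
    have "card S \<le> card {lo..hi}" using sub by (intro card_mono) auto
    then have card: "real (card S) \<le> real (hi - lo) + 1" using lohi by simp
    have "real (hi - lo) * g = (\<Sum>i = lo..<hi. g)" using lohi by simp
    also have "\<dots> \<le> (\<Sum>i = lo..<hi. s (Suc i) - s i)"
      using hi by (intro sum_mono gaps) (auto simp: S_def)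
    also have "\<dots> = s hi - s lo" using lohi by (rule sum_Suc_diff')
    also have "\<dots> \<le> l" using lo hi by (auto simp: S_def)
    finally have "real (hi - lo) \<le> l / g" using g by (simp add: field_simps)
    then show ?thesis using card by (simp add: S_def)
  qed
qed

lemma emeasure_UN_intervals_le:
  assumes "finite I" "0 \<le> l" "\<And>i. i \<in> I \<Longrightarrow> b i - a i \<le> l"
  shows "emeasure lborel (\<Union>i\<in>I. {a i .. b i}) \<le> ennreal (real (card I) * l)"
proof -
  have "emeasure lborel (\<Union>i\<in>I. {a i .. b i}) \<le> (\<Sum>i\<in>I. emeasure lborel {a i .. b i})"
    by (rule emeasure_subadditive_finite) (use assms in auto)
  also have "\<dots> \<le> (\<Sum>i\<in>I. ennreal l)"
  proof (intro sum_mono)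
    fix i assume "i \<in> I"
    then show "emeasure lborel {a i .. b i} \<le> ennreal l"
      using assms(3) by (cases "a i \<le> b i") (auto intro: ennreal_leI)
  qed
  also have "\<dots> = ennreal (real (card I) * l)"
    using assms(2) by (simp add: ennreal_mult ennreal_of_nat_eq_real_of_nat)
  finally show ?thesis .
qed

lemma closed_UN_escaping:
  fixes A :: "nat \<Rightarrow> real set"
  assumes closed: "\<And>k. closed (A k)" and above: "\<And>k y. y \<in> A k \<Longrightarrow> t k \<le> y"
    and t: "filterlim t at_top sequentially"
  shows "closed (\<Union>k. A k)"
  unfolding closed_def
proof (rule open_subopen[THEN iffD2], intro ballI)
  fix x assume x: "x \<in> - (\<Union>k. A k)"
  obtain K where K: "\<And>k. K \<le> k \<Longrightarrow> x + 1 \<le> t k"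
    using t unfolding filterlim_at_top eventually_sequentially by blast
  define T where "T = {..<x + 1} - (\<Union>k<K. A k)"
  have "open T" unfolding T_def using closed by (intro open_Diff closed_UN) auto
  moreover have "x \<in> T" using x by (auto simp: T_def)
  moreover have "T \<subseteq> - (\<Union>k. A k)"
  proof
    fix y assume y: "y \<in> T"
    have "y \<notin> A k" for k
      using y K[of k] above[of y k] by (cases "k < K") (auto simp: T_def)
    then show "y \<in> - (\<Union>k. A k)" by blast
  qed
  ultimately show "\<exists>T. open T \<and> x \<in> T \<and> T \<subseteq> - (\<Union>k. A k)" by blast
qed

lemma representable_by_consecutive:
  fixes Q s :: nat
  assumes Q: "1 \<le> Q" and s: "Q * (Q + 1) \<le> s"
  shows "\<exists>m j. m \<le> Q \<and> s = m * Q + j * (Q + 1)"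
proof -
  define q where "q = s div Q"
  define r where "r = s mod Q"
  have "(Q * (Q + 1)) div Q \<le> s div Q" by (rule div_le_mono[OF s])
  then have "Q + 1 \<le> q" using Q by (simp add: q_def)
  moreover have "r < Q" using Q by (simp add: r_def)
  ultimately have rq: "r \<le> q" by simp
  define t where "t = q - r"
  define m where "m = t mod (Q + 1)"
  define j where "j = r + Q * (t div (Q + 1))"
  have "m * Q + j * (Q + 1) = Q * (t mod (Q + 1) + (Q + 1) * (t div (Q + 1))) + r * (Q + 1)"
    by (simp add: m_def j_def algebra_simps)
  also have "\<dots> = Q * t + r * Q + r"
    using mod_mult_div_eq[of t "Q + 1"] by (simp add: algebra_simps)
  also have "\<dots> = Q * (t + r) + r" by (simp add: algebra_simps)
  also have "\<dots> = s" using rq by (simp add: t_def q_def r_def algebra_simps)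
  finally have "m * Q + j * (Q + 1) = s" .
  moreover have "m \<le> Q" by (simp add: m_def)
  ultimately show ?thesis by metis
qed

lemma continuous_damped_urysohn:
  fixes U V :: "real set"
  assumes U: "closed U" and V: "open V" and UV: "U \<subseteq> V"
  obtains g where "continuous_on UNIV g" "\<And>y. 0 \<le> g y" "(g \<longlongrightarrow> 0) at_top"
    "\<And>y. y \<in> U \<Longrightarrow> g y = 1 / sqrt (1 + \<bar>y\<bar>)" "\<And>y. g y \<noteq> 0 \<Longrightarrow> y \<in> V"
proof -
  obtain F :: "real \<Rightarrow> real" where F: "continuous_on UNIV F"
    and range: "\<And>y. F y \<in> closed_segment 1 0" and one: "\<And>y. y \<in> U \<Longrightarrow> F y = 1"
    and zero: "\<And>y. y \<in> - V \<Longrightarrow> F y = 0"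
    using Urysohn[OF U _ , of "- V" 1 0] V UV by (auto simp: closed_Compl)
  have F01: "0 \<le> F y" "F y \<le> 1" for y using range[of y] by (auto simp: closed_segment_eq_real_ivl)
  define g where "g y = F y / sqrt (1 + \<bar>y\<bar>)" for y
  show ?thesis
  proof
    show "continuous_on UNIV g" unfolding g_def
      by (intro continuous_intros F) (auto simp: add_pos_nonneg)
    show "0 \<le> g y" for y unfolding g_def using F01[of y] by simp
    show "g y = 1 / sqrt (1 + \<bar>y\<bar>)" if "y \<in> U" for y using one[OF that] by (simp add: g_def)
    show "y \<in> V" if "g y \<noteq> 0" for y using zero[of y] that by (auto simp: g_def)
    show "(g \<longlongrightarrow> 0) at_top"
    proof (rule tendsto_sandwich[of "\<lambda>_. 0" g _ "\<lambda>y. 1 / sqrt (1 + y)"])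
      show "\<forall>\<^sub>F y in at_top. 0 \<le> g y" unfolding g_def using F01 by (auto intro: always_eventually)
      show "\<forall>\<^sub>F y in at_top. g y \<le> 1 / sqrt (1 + y)"
        using eventually_ge_at_top[of "0::real"]
        by eventually_elim (use F01 in \<open>simp add: g_def divide_right_mono\<close>)
      show "((\<lambda>y. 1 / sqrt (1 + y)) \<longlongrightarrow> (0::real)) at_top" by real_asymp
    qed simp
  qed
qed

text \<open>The exponents are chosen only so that the finitely many inequalities proved below
  hold: \<open>eps k\<close> is tiny compared with \<open>mesh k = 2^-(k+2)\<close>, \<open>mesh k\<close> is an
  integer multiple of \<open>short_gap k\<close>, and \<open>long_gap (Suc k) \<le> short_gap k\<close>.\<close>
definition qnum :: "nat \<Rightarrow> nat" where "qnum k = 2 ^ (3 * k + 8)"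
definition bexp :: "nat \<Rightarrow> nat" where "bexp k = 4 * k\<^sup>2 + 30 * k + 30"
definition eps :: "nat \<Rightarrow> real" where "eps k = 1 / 2 ^ bexp k"
definition short_gap :: "nat \<Rightarrow> real" where "short_gap k = real (qnum k) * eps k"
definition long_gap :: "nat \<Rightarrow> real" where "long_gap k = (real (qnum k) + 1) * eps k"
definition mesh :: "nat \<Rightarrow> real" where "mesh k = 1 / 2 ^ (k + 2)"
definition mesh_ratio :: "nat \<Rightarrow> nat" where "mesh_ratio k = 2 ^ (bexp k - (4 * k + 10))"
definition radius :: "nat \<Rightarrow> real" where "radius k = real k + 1"

lemma qnum_ge1: "1 \<le> qnum k" by (simp add: qnum_def)
lemma of_nat_qnum: "real (qnum k) = 2 ^ (3 * k + 8)" by (simp add: qnum_def)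
lemma eps_pos: "0 < eps k" by (simp add: eps_def)
lemma short_gap_pos: "0 < short_gap k" using qnum_ge1[of k] eps_pos[of k] by (simp add: short_gap_def)
lemma long_gap_eq: "long_gap k = short_gap k + eps k"
  by (simp add: long_gap_def short_gap_def algebra_simps)
lemma long_gap_pos: "0 < long_gap k" using short_gap_pos[of k] eps_pos[of k] by (simp add: long_gap_eq)
lemma mesh_pos: "0 < mesh k" by (simp add: mesh_def)
lemma radius_ge1: "1 \<le> radius k" by (simp add: radius_def)
lemma bexp_ge: "7 * k + 30 \<le> bexp k" by (simp add: bexp_def)

lemma eps_Suc: "eps (Suc k) = eps k / 2 ^ (8 * k + 34)"
proof -
  have "bexp (Suc k) = bexp k + (8 * k + 34)" by (simp add: bexp_def power2_eq_square algebra_simps)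
  then show ?thesis by (simp add: eps_def power_add)
qed

lemma mesh_le: "mesh k \<le> 1 / 4"
  using one_le_power[of "2::real" k] by (simp add: mesh_def power_add frac_le)

lemma mesh_eq_ratio_short_gap: "mesh k = real (mesh_ratio k) * short_gap k"
proof -
  obtain r where r: "bexp k = (k + 2) + (3 * k + 8) + r"
    using bexp_ge[of k] le_Suc_ex[of "4 * k + 10" "bexp k"] by auto
  have "mesh_ratio k = 2 ^ r" by (simp add: mesh_ratio_def r)
  moreover have "(2::real) ^ bexp k = 2 ^ (k + 2) * 2 ^ (3 * k + 8) * 2 ^ r"
    by (subst r) (simp only: power_add)
  ultimately show ?thesis by (simp add: mesh_def short_gap_def eps_def of_nat_qnum)
qed

lemma qnum_window_le_mesh: "(real (qnum k) * (real (qnum k) + 1) + 1) * eps k \<le> mesh k"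
proof -
  have q: "1 \<le> real (qnum k)" using qnum_ge1[of k] by simp
  then have "1 * real (qnum k) \<le> real (qnum k) * real (qnum k)" by (intro mult_right_mono) auto
  moreover have "real (qnum k) * (real (qnum k) + 1) + 1
      = real (qnum k) * real (qnum k) + real (qnum k) + 1" by (simp add: algebra_simps)
  ultimately have "real (qnum k) * (real (qnum k) + 1) + 1 \<le> 4 * real (qnum k) * real (qnum k)"
    using q by linarith
  also have "\<dots> = 2 ^ (2 + (3 * k + 8) + (3 * k + 8))" by (simp only: power_add of_nat_qnum) simp
  finally have "(real (qnum k) * (real (qnum k) + 1) + 1) / 2 ^ bexp k \<le> 1 / 2 ^ (k + 2)"
    by (rule divide_power2_le) (use bexp_ge[of k] in simp)
  then show ?thesis by (simp add: eps_def mesh_def)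
qed

lemma eps_le_mesh: "eps k \<le> mesh k"
proof -
  have "1 \<le> real (qnum k) * (real (qnum k) + 1) + 1" by simp
  then have "eps k \<le> (real (qnum k) * (real (qnum k) + 1) + 1) * eps k"
    using eps_pos[of k] by simp
  then show ?thesis using qnum_window_le_mesh[of k] by linarith
qed

lemma grid_span_le: "real (qnum k) * short_gap k + long_gap k + 2 * eps k \<le> 2 * mesh k"
proof -
  have "1 \<le> real (qnum k)" using qnum_ge1[of k] by simp
  then have "1 * 1 \<le> real (qnum k) * (real (qnum k) + 1)" by (intro mult_mono) auto
  then have "2 * eps k \<le> (real (qnum k) * (real (qnum k) + 1) + 1) * eps k"
    using eps_pos[of k] by (intro mult_right_mono) auto
  moreover have "real (qnum k) * short_gap k + long_gap k
      = (real (qnum k) * (real (qnum k) + 1) + 1) * eps k"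
    by (simp add: short_gap_def long_gap_def algebra_simps)
  ultimately show ?thesis using qnum_window_le_mesh[of k] by linarith
qed

lemma qnum_short_gap_le: "real (qnum k) * short_gap k \<le> 2 * mesh k"
  using grid_span_le[of k] long_gap_pos[of k] eps_pos[of k] by linarith

lemma long_gap_le: "long_gap k \<le> 2 * mesh k"
proof -
  have "0 \<le> real (qnum k) * short_gap k" using short_gap_pos[of k] by simp
  then show ?thesis using grid_span_le[of k] eps_pos[of k] by linarith
qed

lemma short_gap_le1: "short_gap k \<le> 1"
proof -
  have "short_gap k \<le> real (qnum k) * short_gap k" using qnum_ge1[of k] short_gap_pos[of k] by simp
  then show ?thesis using qnum_short_gap_le[of k] mesh_le[of k] by linarith
qed

lemma long_gap_Suc_le_short_gap: "long_gap (Suc k) \<le> short_gap k"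
proof -
  have "long_gap (Suc k) = (2 ^ (3 * k + 11) + 1) * eps k / 2 ^ (8 * k + 34)"
    by (simp add: long_gap_def of_nat_qnum eps_Suc)
  also have "\<dots> \<le> 2 ^ (3 * k + 12) * eps k / 2 ^ (8 * k + 34)"
  proof -
    have "(2::real) ^ (3 * k + 11) + 1 \<le> 2 ^ (3 * k + 12)"
      using one_le_power[of "2::real" "3 * k + 11"] by (simp add: power_add)
    then show ?thesis using eps_pos[of k] by (intro divide_right_mono mult_right_mono) auto
  qed
  also have "\<dots> \<le> 2 ^ (3 * k + 8) * eps k"
  proof -
    have "(2::real) ^ (3 * k + 12) \<le> 2 ^ (3 * k + 8) * 2 ^ (8 * k + 34)"
      unfolding power_add[symmetric] by (rule power_increasing) auto
    then show ?thesis using eps_pos[of k] by (simp add: field_simps)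
  qed
  finally show ?thesis by (simp add: short_gap_def of_nat_qnum)
qed

section \<open>The sequence\<close>

text \<open>The long stretch
  covers every offset below \<open>2 * mesh k\<close>; the short stretch is longer than
  \<open>3 * radius k + 10\<close>, which keeps the regions used by different blocks apart.\<close>
definition long_steps :: "nat \<Rightarrow> nat" where "long_steps k = nat \<lceil>2 * mesh k / long_gap k\<rceil>"
definition short_steps :: "nat \<Rightarrow> nat" where
  "short_steps k = nat \<lceil>(3 * radius k + 10) / short_gap k\<rceil>"
definition block_start :: "nat \<Rightarrow> nat" where
  "block_start k = (\<Sum>i<k. long_steps i + short_steps i)"
definition pivot :: "nat \<Rightarrow> nat" where "pivot k = block_start k + long_steps k"
definition block_of :: "nat \<Rightarrow> nat" where "block_of n = (LEAST k. n < block_start (Suc k))"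
definition gap :: "nat \<Rightarrow> real" where
  "gap n = (if n < pivot (block_of n) then long_gap (block_of n) else short_gap (block_of n))"
definition lam :: "nat \<Rightarrow> real" where "lam n = (\<Sum>i<n. gap i)"

lemma long_steps_ge1: "1 \<le> long_steps k"
  unfolding long_steps_def by (rule nat_ceiling_bounds) (use mesh_pos[of k] long_gap_pos[of k] in simp)

lemma short_steps_ge1: "1 \<le> short_steps k"
  unfolding short_steps_def
  by (rule nat_ceiling_bounds) (use radius_ge1[of k] short_gap_pos[of k] in simp)

lemma long_steps_lower: "2 * mesh k \<le> real (long_steps k) * long_gap k"
proof -
  have "2 * mesh k / long_gap k \<le> real (long_steps k)" unfolding long_steps_def
    by (rule nat_ceiling_bounds) (use mesh_pos[of k] long_gap_pos[of k] in simp)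
  then show ?thesis using long_gap_pos[of k] by (simp add: divide_simps)
qed

lemma long_steps_upper: "real (long_steps k) * long_gap k \<le> 2 * mesh k + long_gap k"
proof -
  have "real (long_steps k) < 2 * mesh k / long_gap k + 1" unfolding long_steps_def
    by (rule nat_ceiling_bounds) (use mesh_pos[of k] long_gap_pos[of k] in simp)
  then show ?thesis using long_gap_pos[of k] by (simp add: field_simps)
qed

lemma short_steps_lower: "3 * radius k + 10 \<le> real (short_steps k) * short_gap k"
proof -
  have "(3 * radius k + 10) / short_gap k \<le> real (short_steps k)" unfolding short_steps_def
    by (rule nat_ceiling_bounds) (use radius_ge1[of k] short_gap_pos[of k] in simp)
  then show ?thesis using short_gap_pos[of k] by (simp add: divide_simps)
qed

lemma short_steps_upper: "real (short_steps k) * short_gap k \<le> 3 * radius k + 11"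
proof -
  have "real (short_steps k) < (3 * radius k + 10) / short_gap k + 1" unfolding short_steps_def
    by (rule nat_ceiling_bounds) (use radius_ge1[of k] short_gap_pos[of k] in simp)
  then have "real (short_steps k) * short_gap k \<le> 3 * radius k + 10 + short_gap k"
    using short_gap_pos[of k] by (simp add: field_simps)
  then show ?thesis using short_gap_le1[of k] by linarith
qed

lemma block_start_0 [simp]: "block_start 0 = 0"
  by (simp add: block_start_def)

lemma block_start_Suc: "block_start (Suc k) = pivot k + short_steps k"
  by (simp add: block_start_def pivot_def)

lemma pivot_Suc: "pivot (Suc k) = pivot k + short_steps k + long_steps (Suc k)"
  by (simp add: pivot_def block_start_Suc)

lemma block_start_mono: "k \<le> k' \<Longrightarrow> block_start k \<le> block_start k'"
  unfolding block_start_def by (rule sum_mono2) auto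

lemma block_start_ge: "k \<le> block_start k"
proof (induction k)
  case (Suc k)
  then show ?case using short_steps_ge1[of k] by (simp add: block_start_Suc pivot_def)
qed simp

lemma block_of_eqI:
  assumes "block_start k \<le> n" "n < block_start (Suc k)"
  shows "block_of n = k"
  unfolding block_of_def
proof (rule Least_equality)
  fix k' assume "n < block_start (Suc k')"
  then show "k \<le> k'" using assms(1) block_start_mono[of "Suc k'" k] by linarith
qed fact

lemma block_of_bounds: "block_start (block_of n) \<le> n \<and> n < block_start (Suc (block_of n))"
proof -
  have upper: "n < block_start (Suc (block_of n))" unfolding block_of_def
    by (rule LeastI[of _ n]) (use block_start_ge[of "Suc n"] in simp)
  have "block_start (block_of n) \<le> n"
  proof (cases "block_of n")
    case (Suc k)
    have "\<not> n < block_start (Suc k)"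
      using Suc Least_le[of "\<lambda>k. n < block_start (Suc k)" k] by (auto simp: block_of_def)
    then show ?thesis using Suc by simp
  qed simp
  then show ?thesis using upper by simp
qed

lemma block_of_ge: "block_start k \<le> n \<Longrightarrow> k \<le> block_of n"
  using block_of_bounds[of n] block_start_mono[of "Suc (block_of n)" k] by linarith

lemma gap_long: "block_start k \<le> n \<Longrightarrow> n < pivot k \<Longrightarrow> gap n = long_gap k"
  using block_of_eqI[of k n] by (simp add: gap_def pivot_def block_start_Suc)

lemma gap_short: "pivot k \<le> n \<Longrightarrow> n < block_start (Suc k) \<Longrightarrow> gap n = short_gap k"
  using block_of_eqI[of k n] by (simp add: gap_def pivot_def block_start_Suc)

lemma gap_bounds: "short_gap (block_of n) \<le> gap n" "gap n \<le> long_gap (block_of n)"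
  using eps_pos[of "block_of n"] by (simp_all add: gap_def long_gap_eq)

lemma gap_pos: "0 < gap n"
  using gap_bounds(1)[of n] short_gap_pos[of "block_of n"] by linarith

lemma long_gap_antimono: "k \<le> k' \<Longrightarrow> long_gap k' \<le> long_gap k"
proof (induction k' rule: dec_induct)
  case (step i)
  have "long_gap (Suc i) \<le> long_gap i"
    using long_gap_Suc_le_short_gap[of i] eps_pos[of i] by (simp add: long_gap_eq)
  then show ?case using step by simp
qed simp

lemma gap_Suc_le: "gap (Suc n) \<le> gap n"
proof -
  define k where "k = block_of n"
  have n: "block_start k \<le> n" "n < block_start (Suc k)"
    using block_of_bounds[of n] by (auto simp: k_def)
  show ?thesis
  proof (cases "Suc n < block_start (Suc k)")
    case True
    then have "block_of (Suc n) = k" using n by (intro block_of_eqI) auto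
    then show ?thesis using eps_pos[of k] by (auto simp: gap_def k_def long_gap_eq)
  next
    case False
    then have last: "Suc n = block_start (Suc k)" using n by simp
    then have "gap n = short_gap k"
      using short_steps_ge1[of k] by (intro gap_short) (auto simp: block_start_Suc)
    moreover have "gap (Suc n) = long_gap (Suc k)"
      using last long_steps_ge1[of "Suc k"] by (intro gap_long) (auto simp: pivot_def)
    ultimately show ?thesis using long_gap_Suc_le_short_gap[of k] by simp
  qed
qed

lemma decseq_gap: "decseq gap"
  using gap_Suc_le by (simp add: decseq_SucI)

lemma gap_tendsto_zero: "gap \<longlonglongrightarrow> 0"
proof (rule LIMSEQ_I)
  fix r :: real assume r: "0 < r"
  obtain k where k: "(1 / 2) ^ k < r" using real_arch_pow_inv[OF r, of "1 / 2"] by auto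
  have "2 * mesh k \<le> (1 / 2) ^ k" by (simp add: mesh_def power_add power_divide frac_le)
  have "norm (gap n) < r" if "block_start k \<le> n" for n
  proof -
    have "gap n \<le> long_gap k"
      using gap_bounds(2)[of n] long_gap_antimono[OF block_of_ge[OF that]] by linarith
    then show ?thesis using gap_pos[of n] long_gap_le[of k] \<open>2 * mesh k \<le> _\<close> k by simp
  qed
  then show "\<exists>n0. \<forall>n\<ge>n0. norm (gap n - 0) < r" by auto
qed

lemma lam_Suc: "lam (Suc n) = lam n + gap n"
  by (simp add: lam_def)

lemma lam_nonneg: "0 \<le> lam n"
  unfolding lam_def by (rule sum_nonneg) (simp add: gap_pos less_imp_le)

lemma strict_mono_lam: "strict_mono lam"
  by (rule strict_monoI_Suc) (simp add: lam_Suc gap_pos)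

lemma lam_diff: "a \<le> b \<Longrightarrow> lam b - lam a = (\<Sum>i = a..<b. gap i)"
  by (simp add: lam_Suc sum_Suc_diff'[symmetric])

lemma lam_pivot_minus: "j \<le> long_steps k \<Longrightarrow> lam (pivot k - j) = lam (pivot k) - real j * long_gap k"
proof -
  assume j: "j \<le> long_steps k"
  have "lam (pivot k) - lam (pivot k - j) = (\<Sum>i = pivot k - j..<pivot k. gap i)"
    by (rule lam_diff) simp
  also have "\<dots> = (\<Sum>i = pivot k - j..<pivot k. long_gap k)"
    using j by (intro sum.cong refl gap_long) (auto simp: pivot_def)
  also have "\<dots> = real j * long_gap k" using j by (simp add: pivot_def)
  finally show ?thesis by simp
qed

lemma lam_pivot_plus: "i \<le> short_steps k \<Longrightarrow> lam (pivot k + i) = lam (pivot k) + real i * short_gap k"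
proof -
  assume i: "i \<le> short_steps k"
  have "lam (pivot k + i) - lam (pivot k) = (\<Sum>n = pivot k..<pivot k + i. gap n)"
    by (rule lam_diff) simp
  also have "\<dots> = (\<Sum>n = pivot k..<pivot k + i. short_gap k)"
    using i by (intro sum.cong refl gap_short) (auto simp: block_start_Suc)
  finally show ?thesis by simp
qed

lemma lam_pivot_Suc:
  "lam (pivot (Suc k))
     = lam (pivot k) + real (short_steps k) * short_gap k + real (long_steps (Suc k)) * long_gap (Suc k)"
  using lam_pivot_plus[of "short_steps k" k] lam_pivot_minus[of "long_steps (Suc k)" "Suc k"]
  by (simp add: pivot_Suc)

lemma lam_pivot_Suc_ge: "lam (pivot k) + 3 * radius k + 10 \<le> lam (pivot (Suc k))"
  using lam_pivot_Suc[of k] short_steps_lower[of k] long_gap_pos[of "Suc k"]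
  by (simp add: add_increasing2)

lemma lam_pivot_ge: "13 * real k \<le> lam (pivot k)"
proof (induction k)
  case (Suc k)
  then show ?case using lam_pivot_Suc_ge[of k] radius_ge1[of k] by simp
qed (simp add: lam_nonneg)

lemma lam_pivot_le: "lam (pivot k) \<le> 15 * (real k + 1)\<^sup>2"
proof (induction k)
  case 0
  have "lam (pivot 0) = real (long_steps 0) * long_gap 0"
    using lam_pivot_minus[of "long_steps 0" 0] by (simp add: pivot_def lam_def)
  then show ?case using long_steps_upper[of 0] long_gap_le[of 0] mesh_le[of 0] by simp
next
  case (Suc k)
  have "real (long_steps (Suc k)) * long_gap (Suc k) \<le> 2"
    using long_steps_upper[of "Suc k"] long_gap_le[of "Suc k"] mesh_le[of "Suc k"] by linarith
  then have "lam (pivot (Suc k)) \<le> lam (pivot k) + 3 * radius k + 13"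
    using lam_pivot_Suc[of k] short_steps_upper[of k] by simp
  also have "\<dots> \<le> 15 * (real (Suc k) + 1)\<^sup>2"
    using Suc by (simp add: radius_def power2_eq_square algebra_simps)
  finally show ?case .
qed

lemma lam_at_top: "filterlim lam at_top sequentially"
  unfolding filterlim_at_top
proof
  fix Z :: real
  obtain k :: nat where k: "Z / 13 \<le> real k" using real_arch_simple by blast
  have "Z \<le> lam n" if "pivot k \<le> n" for n
  proof -
    have "lam (pivot k) \<le> lam n" using that strict_mono_lam by (simp add: strict_mono_less_eq)
    then show ?thesis using lam_pivot_ge[of k] k by linarith
  qed
  then show "\<forall>\<^sub>F n in sequentially. Z \<le> lam n" by (rule eventually_sequentiallyI)
qed

lemma short_gap_le_gap: "n < block_start (Suc k) \<Longrightarrow> short_gap k \<le> gap n"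
proof -
  assume n: "n < block_start (Suc k)"
  have "gap (block_start (Suc k) - 1) = short_gap k"
    using short_steps_ge1[of k] by (intro gap_short) (auto simp: block_start_Suc)
  moreover have "gap (block_start (Suc k) - 1) \<le> gap n"
    using decseq_gap n by (simp add: decseq_def)
  ultimately show ?thesis by simp
qed

section \<open>Target sets and divergence on \<open>G\<close>\<close>

definition grid :: "real set \<Rightarrow> nat \<Rightarrow> int set" where
  "grid G k = {z. \<bar>of_int z * mesh k\<bar> \<le> radius k + 2 \<and>
     {of_int z * mesh k - 2 * mesh k .. of_int z * mesh k + 4 * mesh k} \<subseteq> G}"

definition target_point :: "nat \<Rightarrow> int \<Rightarrow> nat \<Rightarrow> real" where
  "target_point k z m = lam (pivot k) + of_int z * mesh k + real m * short_gap k"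

definition target :: "real set \<Rightarrow> nat \<Rightarrow> real set" where
  "target G k = (\<Union>z\<in>grid G k. \<Union>m\<le>qnum k. {target_point k z m .. target_point k z m + eps k})"

definition target_nbhd :: "real set \<Rightarrow> nat \<Rightarrow> real set" where
  "target_nbhd G k =
     (\<Union>z\<in>grid G k. \<Union>m\<le>qnum k. {target_point k z m - eps k <..< target_point k z m + 2 * eps k})"

definition zone_lo :: "nat \<Rightarrow> real" where "zone_lo k = lam (pivot k) - radius k - 3"
definition zone_hi :: "nat \<Rightarrow> real" where "zone_hi k = lam (pivot k) + radius k + 4"

lemma grid_subset: "grid G k \<subseteq> {z. \<bar>of_int z\<bar> * mesh k \<le> radius k + 2}"
  using mesh_pos[of k] by (auto simp: grid_def abs_mult)

lemma finite_grid: "finite (grid G k)"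
  using bounded_scaled_ints(1)[OF mesh_pos, of "radius k + 2" k] radius_ge1[of k] grid_subset
  by (meson finite_subset add_nonneg_nonneg order_trans zero_le_one zero_le_numeral)

lemma card_grid_le: "real (card (grid G k)) \<le> 2 * (radius k + 2) / mesh k + 1"
proof -
  have "card (grid G k) \<le> card {z::int. \<bar>of_int z\<bar> * mesh k \<le> radius k + 2}"
    using bounded_scaled_ints(1)[OF mesh_pos, of "radius k + 2" k] radius_ge1[of k]
    by (intro card_mono grid_subset) auto
  then show ?thesis
    using bounded_scaled_ints(2)[OF mesh_pos, of "radius k + 2" k] radius_ge1[of k] by simp
qed

lemma target_point_bounds:
  assumes "z \<in> grid G k" "m \<le> qnum k"
  shows "lam (pivot k) - radius k - 2 \<le> target_point k z m"
    and "target_point k z m \<le> lam (pivot k) + radius k + 3"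
proof -
  have "\<bar>of_int z * mesh k\<bar> \<le> radius k + 2" using assms(1) by (simp add: grid_def)
  moreover have "0 \<le> real m * short_gap k" using short_gap_pos[of k] by simp
  moreover have "real m * short_gap k \<le> real (qnum k) * short_gap k"
    using assms(2) short_gap_pos[of k] by (intro mult_right_mono) auto
  moreover note qnum_short_gap_le[of k] mesh_le[of k]
  ultimately show "lam (pivot k) - radius k - 2 \<le> target_point k z m"
    and "target_point k z m \<le> lam (pivot k) + radius k + 3"
    unfolding target_point_def by linarith+
qed

lemma target_nbhdE:
  assumes "y \<in> target_nbhd G k"
  obtains z m where "z \<in> grid G k" "m \<le> qnum k"
    "target_point k z m - eps k \<le> y" "y \<le> target_point k z m + 2 * eps k"
  using assms unfolding target_nbhd_def by fastforce

lemma target_subset_nbhd: "target G k \<subseteq> target_nbhd G k"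
  unfolding target_def target_nbhd_def using eps_pos[of k] by fastforce

lemma targets_subset_nbhds: "(\<Union>k. target G k) \<subseteq> (\<Union>k. target_nbhd G k)"
  using target_subset_nbhd by blast

lemma target_nbhd_in_zone: "y \<in> target_nbhd G k \<Longrightarrow> zone_lo k \<le> y \<and> y \<le> zone_hi k"
  by (elim target_nbhdE)
    (use target_point_bounds eps_le_mesh[of k] mesh_le[of k] in \<open>fastforce simp: zone_lo_def zone_hi_def\<close>)

lemma zone_lo_mono: "k \<le> k' \<Longrightarrow> zone_lo k \<le> zone_lo k'"
proof (induction k' rule: dec_induct)
  case (step i)
  then show ?case using lam_pivot_Suc_ge[of i] radius_ge1[of i] by (simp add: zone_lo_def radius_def)
qed simp

lemma zones_separated: "k < k' \<Longrightarrow> zone_hi k < zone_lo k'"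
  using lam_pivot_Suc_ge[of k] radius_ge1[of k] zone_lo_mono[of "Suc k" k']
  by (simp add: zone_lo_def zone_hi_def radius_def)

lemma target_nbhd_disjoint: "y \<in> target_nbhd G k \<Longrightarrow> y \<in> target_nbhd G k' \<Longrightarrow> k = k'"
  using zones_separated[of k k'] zones_separated[of k' k] target_nbhd_in_zone[of y G k]
    target_nbhd_in_zone[of y G k'] by (cases k k' rule: linorder_cases) auto

lemma zone_lo_at_top: "filterlim zone_lo at_top sequentially"
proof (rule filterlim_at_top_mono)
  show "filterlim (\<lambda>k. 12 * real k - 4) at_top sequentially" by real_asymp
  show "\<forall>\<^sub>F k in sequentially. 12 * real k - 4 \<le> zone_lo k"
    using lam_pivot_ge by (simp add: zone_lo_def radius_def)
qed

lemma closed_targets: "closed (\<Union>k. target G k)"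
proof (rule closed_UN_escaping[OF _ _ zone_lo_at_top])
  show "closed (target G k)" for k unfolding target_def using finite_grid by (intro closed_UN) auto
  show "zone_lo k \<le> y" if "y \<in> target G k" for k y
    using target_nbhd_in_zone that target_subset_nbhd by blast
qed

lemma open_target_nbhds: "open (\<Union>k. target_nbhd G k)"
  unfolding target_nbhd_def by (intro open_UN ballI) auto

lemma hits_target:
  assumes z: "z \<in> grid G k"
    and near: "mesh k \<le> x - of_int z * mesh k" "x - of_int z * mesh k < 2 * mesh k"
  shows "\<exists>n. x + lam n \<in> target G k"
proof -
  define c where "c = of_int z * mesh k"
  define Q where "Q = qnum k"
  define s where "s = nat \<lfloor>(x - c) / eps k\<rfloor>"
  have e: "0 < eps k" by (rule eps_pos)
  have "real s = of_int \<lfloor>(x - c) / eps k\<rfloor>"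
    using near e mesh_pos[of k] by (simp add: s_def c_def)
  then have s: "real s \<le> (x - c) / eps k" "(x - c) / eps k < real s + 1" by linarith+
  then have s_eps: "real s * eps k \<le> x - c" "x - c < real s * eps k + eps k"
    using e by (simp_all add: field_simps)
  have "Q * (Q + 1) \<le> s"
  proof -
    have "(real Q * (real Q + 1) + 1) * eps k \<le> x - c"
      using qnum_window_le_mesh[of k] near by (simp add: Q_def c_def)
    then have "real Q * (real Q + 1) + 1 \<le> (x - c) / eps k" using e by (simp add: field_simps)
    then have "real Q * (real Q + 1) + 1 < real s + 1" using s by linarith
    then have "real (Q * (Q + 1)) < real s" by (simp add: algebra_simps)
    then show ?thesis by (simp only: of_nat_less_iff)
  qed
  then obtain m j where mj: "m \<le> Q" "s = m * Q + j * (Q + 1)"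
    using representable_by_consecutive qnum_ge1 Q_def by blast
  then have s_split: "real s * eps k = real m * short_gap k + real j * long_gap k"
    by (simp add: short_gap_def long_gap_def Q_def algebra_simps)
  have "j \<le> long_steps k"
  proof (rule ccontr)
    assume "\<not> j \<le> long_steps k"
    then have "real (long_steps k) * long_gap k \<le> real j * long_gap k"
      using long_gap_pos[of k] by (intro mult_right_mono) auto
    moreover have "0 \<le> real m * short_gap k" using short_gap_pos[of k] by simp
    ultimately show False using long_steps_lower[of k] s_split s_eps near by (simp add: c_def)
  qed
  then have "x + lam (pivot k - j) \<in> {target_point k z m .. target_point k z m + eps k}"
    using lam_pivot_minus s_split s_eps by (auto simp: target_point_def c_def)
  then show ?thesis using z mj(1) unfolding target_def Q_def by blast
qed

lemma grid_point_below:
  assumes G: "ball x (4 * mesh k) \<subseteq> G" and x: "\<bar>x\<bar> \<le> radius k"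
  obtains z where "z \<in> grid G k" "mesh k \<le> x - of_int z * mesh k" "x - of_int z * mesh k < 2 * mesh k"
proof
  define z where "z = \<lfloor>x / mesh k\<rfloor> - 1"
  have h: "0 < mesh k" by (rule mesh_pos)
  have "of_int z \<le> x / mesh k - 1" "x / mesh k - 2 < of_int z" unfolding z_def by linarith+
  then show lo: "mesh k \<le> x - of_int z * mesh k" and hi: "x - of_int z * mesh k < 2 * mesh k"
    using h by (simp_all add: field_simps)
  have "\<bar>of_int z * mesh k\<bar> \<le> radius k + 2" using lo hi x mesh_le[of k] by linarith
  moreover have "{of_int z * mesh k - 2 * mesh k .. of_int z * mesh k + 4 * mesh k} \<subseteq> G"
  proof
    fix y assume "y \<in> {of_int z * mesh k - 2 * mesh k .. of_int z * mesh k + 4 * mesh k}"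
    then have "dist x y < 4 * mesh k" using lo hi h by (auto simp: dist_real_def abs_less_iff)
    then show "y \<in> G" using G by auto
  qed
  ultimately show "z \<in> grid G k" by (simp add: grid_def)
qed

lemma eventually_hits_target:
  assumes "open G" "x \<in> G"
  shows "\<forall>\<^sub>F k in sequentially. \<exists>n. x + lam n \<in> target G k"
proof -
  obtain r where r: "0 < r" "ball x r \<subseteq> G" using assms by (meson open_contains_ball)
  have "(\<lambda>k. 4 * mesh k) \<longlonglongrightarrow> 0" unfolding mesh_def by real_asymp
  then have "\<forall>\<^sub>F k in sequentially. 4 * mesh k < r" using r(1) by (rule order_tendstoD)
  moreover obtain K :: nat where "\<bar>x\<bar> \<le> real K" using real_arch_simple by blast
  then have "\<forall>\<^sub>F k in sequentially. \<bar>x\<bar> \<le> radius k"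
    by (intro eventually_sequentiallyI[of K]) (simp add: radius_def)
  ultimately show ?thesis
  proof eventually_elim
    case (elim k)
    then have "ball x (4 * mesh k) \<subseteq> G" using r(2) by auto
    then show ?case using grid_point_below elim(2) hits_target by metis
  qed
qed

lemma shift_sum_infinite_on_open:
  assumes G: "open G" "x \<in> G"
    and f: "\<And>k y. y \<in> target G k \<Longrightarrow> c k \<le> f y" and c: "\<And>k. 0 \<le> c k" "\<not> summable c"
  shows "shift_sum f lam x = \<infinity>"
proof -
  obtain k0 where k0: "\<And>k. k0 \<le> k \<Longrightarrow> \<exists>n. x + lam n \<in> target G k"
    using eventually_hits_target[OF G] unfolding eventually_sequentially by blast
  define hit where "hit k = (SOME n. x + lam n \<in> target G (k + k0))" for k
  have hit: "x + lam (hit k) \<in> target G (k + k0)" for k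
    unfolding hit_def by (rule someI_ex) (rule k0, simp)
  have "inj hit"
  proof (rule injI)
    fix a b assume "hit a = hit b"
    then have "a + k0 = b + k0"
      using hit[of a] hit[of b] target_subset_nbhd target_nbhd_disjoint by (metis subsetD)
    then show "a = b" by simp
  qed
  have partial: "(\<Sum>k<K. ennreal (c (k + k0))) \<le> shift_sum f lam x" for K
  proof -
    have "(\<Sum>k<K. ennreal (c (k + k0))) \<le> (\<Sum>k<K. ennreal (f (x + lam (hit k))))"
      by (intro sum_mono ennreal_leI f[OF hit])
    also have "\<dots> = (\<Sum>n\<in>hit ` {..<K}. ennreal (f (x + lam n)))"
      using \<open>inj hit\<close> by (simp add: sum.reindex inj_on_subset)
    also have "\<dots> \<le> (\<Sum>n. ennreal (f (x + lam n)))" by (rule sum_le_suminf) auto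
    finally show ?thesis by (simp add: shift_sum_def)
  qed
  have "(\<Sum>k. ennreal (c (k + k0))) = \<infinity>"
  proof (rule ccontr)
    assume "(\<Sum>k. ennreal (c (k + k0))) \<noteq> \<infinity>"
    then have "summable (\<lambda>k. c (k + k0))" using c(1) by (intro summable_suminf_not_top) auto
    then show False using c(2) by simp
  qed
  moreover have "(\<Sum>k. ennreal (c (k + k0))) \<le> shift_sum f lam x"
    by (rule suminf_le_const) (use partial in auto)
  ultimately show ?thesis by (simp add: top_unique)
qed

section \<open>Exceptional sets and convergence off \<open>G\<close>\<close>

text \<open>If \<open>x \<notin> G\<close>, \<open>\<bar>x\<bar> \<le> radius k\<close> and \<open>x + \<lambda>\<^sub>n\<close>
  is close to \<open>target G k\<close>, then \<open>\<lambda>\<^sub>n\<close> lies either in the short-step part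
  of block \<open>k\<close>, so that \<open>x\<close> is close to the progression \<open>short_gap k \<int>\<close>,
  or in an earlier block, so that \<open>x\<close> is close to one of few translates.\<close>
definition progression_index :: "nat \<Rightarrow> int set" where
  "progression_index k = {t. \<bar>of_int t\<bar> * short_gap k \<le> radius k + 1}"

definition progression_set :: "nat \<Rightarrow> real set" where
  "progression_set k = (\<Union>t\<in>progression_index k.
     {of_int t * short_gap k - eps k .. of_int t * short_gap k + 2 * eps k})"

definition sparse_index :: "real set \<Rightarrow> nat \<Rightarrow> (int \<times> nat \<times> nat) set" where
  "sparse_index G k = {(z, m, n). z \<in> grid G k \<and> m \<le> qnum k \<and> n < block_start k \<and>
     target_point k z m - radius k - 1 \<le> lam n \<and> lam n \<le> target_point k z m + radius k + 1}"

definition sparse_set :: "real set \<Rightarrow> nat \<Rightarrow> real set" where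
  "sparse_set G k = (\<Union>(z, m, n)\<in>sparse_index G k.
     {target_point k z m - lam n - eps k .. target_point k z m - lam n + 2 * eps k})"

definition exceptional :: "real set \<Rightarrow> nat \<Rightarrow> real set" where
  "exceptional G k = progression_set k \<union> sparse_set G k"

lemma progression_measure_bound: "(2 * (radius k + 1) / short_gap k + 1) * (3 * eps k) \<le> 1 / 2 ^ (k + 2)"
proof -
  have "(2 * (radius k + 1) / short_gap k + 1) * (3 * eps k)
      = 6 * (real k + 2) / 2 ^ (3 * k + 8) + 3 / 2 ^ bexp k"
    using eps_pos[of k] by (simp add: short_gap_def of_nat_qnum radius_def field_simps) (simp add: eps_def)
  moreover have "6 * (real k + 2) / 2 ^ (3 * k + 8) \<le> 1 / 2 ^ (k + 3)"
  proof (rule divide_power2_le)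
    show "6 * (real k + 2) \<le> 2 ^ (k + 5)"
      using of_nat_Suc_le_power2[of "k + 1"] one_le_power[of "2::real" k] by (simp add: power_add)
  qed simp
  moreover have "3 / 2 ^ bexp k \<le> (1::real) / 2 ^ (k + 3)"
    by (rule divide_power2_le[where a = 2]) (use bexp_ge[of k] in auto)
  moreover have "(1::real) / 2 ^ (k + 3) + 1 / 2 ^ (k + 3) = 1 / 2 ^ (k + 2)" by (simp add: power_add)
  ultimately show ?thesis by linarith
qed

lemma grid_count_bound: "2 * (radius k + 2) / mesh k + 1 \<le> 2 ^ (2 * k + 6)"
proof -
  define P :: real where "P = 2 ^ k"
  have P: "1 \<le> P" "real k + 1 \<le> P" using of_nat_Suc_le_power2[of k] by (simp_all add: P_def)
  have "2 * (radius k + 2) / mesh k + 1 = 2 * (real k + 3) * (4 * P) + 1"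
    by (simp add: radius_def mesh_def P_def power_add algebra_simps)
  also have "\<dots> \<le> 64 * (P * P)"
  proof -
    have "(real k + 3) * (4 * P) \<le> (4 * P) * (4 * P)" using P by (intro mult_right_mono) auto
    moreover have "1 * 1 \<le> P * P" using P by (intro mult_mono) auto
    ultimately show ?thesis by (simp add: algebra_simps)
  qed
  also have "\<dots> = 2 ^ (2 * k + 6)"
  proof -
    have "2 * k + 6 = 6 + k + k" by simp
    then show ?thesis unfolding P_def by (simp only: power_add) simp
  qed
  finally show ?thesis .
qed

lemma sparse_count_bound:
  "((2 * radius (Suc j) + 2) / short_gap j + 1) * (3 * eps (Suc j)) \<le> 2 ^ (j + 6) / 2 ^ (11 * j + 42)"
proof -
  have "(2 * radius (Suc j) + 2) / short_gap j + 1 \<le> (2 * radius (Suc j) + 2) / short_gap j + 1 / short_gap j"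
    using short_gap_le1[of j] short_gap_pos[of j] by (simp add: divide_simps)
  also have "\<dots> = (2 * real j + 7) / short_gap j" by (simp add: radius_def add_divide_distrib[symmetric])
  finally have "((2 * radius (Suc j) + 2) / short_gap j + 1) * (3 * eps (Suc j))
      \<le> (2 * real j + 7) / short_gap j * (3 * eps (Suc j))"
    using eps_pos[of "Suc j"] by (intro mult_right_mono) auto
  also have "\<dots> = 3 * (2 * real j + 7) / (2 ^ (3 * j + 8) * 2 ^ (8 * j + 34))"
  proof -
    have "X / (A * e) * (3 * (e / B)) = 3 * X / (A * B)" if "0 < e" "0 < A" "0 < B" for X A B e :: real
      using that by (simp add: field_simps)
    then show ?thesis using eps_pos[of j] unfolding short_gap_def of_nat_qnum eps_Suc by simp
  qed
  also have "\<dots> = 3 * (2 * real j + 7) / 2 ^ (11 * j + 42)"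
    by (simp only: power_add[symmetric]) simp
  also have "\<dots> \<le> 2 ^ (j + 6) / 2 ^ (11 * j + 42)"
  proof -
    have "3 * (2 * real j + 7) \<le> 2 ^ (j + 6)"
      using of_nat_Suc_le_power2[of j] one_le_power[of "2::real" j] by (simp add: power_add)
    then show ?thesis by (simp add: divide_right_mono)
  qed
  finally show ?thesis .
qed

lemma sparse_measure_bound:
  "(2 * (radius (Suc j) + 2) / mesh (Suc j) + 1) * (real (qnum (Suc j)) + 1) *
     ((2 * radius (Suc j) + 2) / short_gap j + 1) * (3 * eps (Suc j)) \<le> 1 / 2 ^ (Suc j + 2)"
proof -
  have q: "real (qnum (Suc j)) + 1 \<le> 2 ^ (3 * Suc j + 9)"
    using one_le_power[of "2::real" "3 * Suc j + 8"] by (simp add: of_nat_qnum power_add)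
  have "(2 * (radius (Suc j) + 2) / mesh (Suc j) + 1) * (real (qnum (Suc j)) + 1) *
      (((2 * radius (Suc j) + 2) / short_gap j + 1) * (3 * eps (Suc j)))
      \<le> 2 ^ (2 * Suc j + 6) * 2 ^ (3 * Suc j + 9) * (2 ^ (j + 6) / 2 ^ (11 * j + 42))"
    using radius_ge1[of "Suc j"] mesh_pos[of "Suc j"] short_gap_pos[of j] eps_pos[of "Suc j"]
    by (intro mult_mono grid_count_bound q sparse_count_bound) auto
  also have "\<dots> = 2 ^ (6 * j + 26) / 2 ^ (11 * j + 42)" by (simp flip: power_add)
  also have "\<dots> \<le> 1 / 2 ^ (Suc j + 2)" by (rule divide_power2_le) auto
  finally show ?thesis by (simp only: mult.assoc)
qed

lemma finite_progression_index: "finite (progression_index k)"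
  unfolding progression_index_def
  using bounded_scaled_ints(1)[OF short_gap_pos, of "radius k + 1"] radius_ge1[of k] by simp

lemma emeasure_progression_set_le: "emeasure lborel (progression_set k) \<le> ennreal (1 / 2 ^ (k + 2))"
proof -
  have "emeasure lborel (progression_set k) \<le> ennreal (real (card (progression_index k)) * (3 * eps k))"
    unfolding progression_set_def
    by (rule emeasure_UN_intervals_le) (use finite_progression_index eps_pos[of k] in auto)
  also have "\<dots> \<le> ennreal ((2 * (radius k + 1) / short_gap k + 1) * (3 * eps k))"
    using bounded_scaled_ints(2)[OF short_gap_pos, of "radius k + 1" k] radius_ge1[of k] eps_pos[of k]
    by (intro ennreal_leI mult_right_mono) (auto simp: progression_index_def)
  also have "\<dots> \<le> ennreal (1 / 2 ^ (k + 2))" by (intro ennreal_leI progression_measure_bound)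
  finally show ?thesis .
qed

lemma sparse_index_0: "sparse_index G 0 = {}"
  by (simp add: sparse_index_def)

lemma sparse_index_Suc:
  "finite (sparse_index G (Suc j)) \<and> real (card (sparse_index G (Suc j))) \<le>
     (2 * (radius (Suc j) + 2) / mesh (Suc j) + 1) * (real (qnum (Suc j)) + 1) *
     ((2 * radius (Suc j) + 2) / short_gap j + 1)"
proof -
  define k where "k = Suc j"
  define near where "near z m = {n. n < block_start k \<and> target_point k z m - radius k - 1 \<le> lam n \<and>
      lam n \<le> (target_point k z m - radius k - 1) + (2 * radius k + 2)}" for z m
  have near_card: "real (card (near z m)) \<le> (2 * radius k + 2) / short_gap j + 1" for z m
    unfolding near_def
    by (rule card_increasing_points_in_interval[OF short_gap_pos])
      (use short_gap_le_gap radius_ge1[of k] in \<open>auto simp: lam_Suc k_def\<close>)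
  have near_fin: "finite (near z m)" for z m by (simp add: near_def)
  have eq: "sparse_index G k = Sigma (grid G k) (\<lambda>z. Sigma {..qnum k} (\<lambda>m. near z m))"
    by (auto simp: sparse_index_def near_def)
  have fin: "finite (sparse_index G k)" unfolding eq using finite_grid near_fin by auto
  have "real (card (sparse_index G k)) = (\<Sum>z\<in>grid G k. \<Sum>m\<le>qnum k. real (card (near z m)))"
    unfolding eq using finite_grid near_fin by (simp add: card_SigmaI)
  also have "\<dots> \<le> (\<Sum>z\<in>grid G k. \<Sum>m\<le>qnum k. (2 * radius k + 2) / short_gap j + 1)"
    by (intro sum_mono near_card)
  also have "\<dots> = real (card (grid G k)) *
      ((real (qnum k) + 1) * ((2 * radius k + 2) / short_gap j + 1))"
    by simp
  also have "\<dots> \<le> (2 * (radius k + 2) / mesh k + 1) *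
      ((real (qnum k) + 1) * ((2 * radius k + 2) / short_gap j + 1))"
    using card_grid_le[of G k] short_gap_pos[of j] radius_ge1[of k] by (intro mult_right_mono) auto
  finally show ?thesis using fin by (simp add: k_def mult.assoc)
qed

lemma emeasure_sparse_set_le: "emeasure lborel (sparse_set G k) \<le> ennreal (1 / 2 ^ (k + 2))"
proof (cases k)
  case (Suc j)
  have "emeasure lborel (sparse_set G k) \<le> ennreal (real (card (sparse_index G k)) * (3 * eps k))"
    unfolding sparse_set_def split_beta'
    by (rule emeasure_UN_intervals_le) (use sparse_index_Suc[of G j] Suc eps_pos[of k] in auto)
  also have "\<dots> \<le> ennreal ((2 * (radius (Suc j) + 2) / mesh (Suc j) + 1) * (real (qnum (Suc j)) + 1) *
      ((2 * radius (Suc j) + 2) / short_gap j + 1) * (3 * eps (Suc j)))"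
    using sparse_index_Suc[of G j] eps_pos[of k] Suc by (intro ennreal_leI mult_right_mono) auto
  also have "\<dots> \<le> ennreal (1 / 2 ^ (k + 2))" using sparse_measure_bound[of j] Suc by (intro ennreal_leI) simp
  finally show ?thesis .
qed (simp add: sparse_set_def sparse_index_0)

lemma exceptional_sets: "exceptional G k \<in> sets lborel"
proof -
  have "finite (sparse_index G k)" by (cases k) (auto simp: sparse_index_0 sparse_index_Suc)
  then show ?thesis unfolding exceptional_def progression_set_def sparse_set_def
    using finite_progression_index by (intro sets.Un sets.finite_UN) auto
qed

lemma emeasure_exceptional_le: "emeasure lborel (exceptional G k) \<le> ennreal (1 / 2 ^ (k + 1))"
proof -
  have "emeasure lborel (exceptional G k)
      \<le> emeasure lborel (progression_set k) + emeasure lborel (sparse_set G k)"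
    using exceptional_sets[of G k] unfolding exceptional_def
    by (intro emeasure_subadditive) (auto simp: progression_set_def sparse_set_def)
  also have "\<dots> \<le> ennreal (1 / 2 ^ (k + 2)) + ennreal (1 / 2 ^ (k + 2))"
    by (intro add_mono emeasure_progression_set_le emeasure_sparse_set_le)
  also have "\<dots> = ennreal (1 / 2 ^ (k + 1))" by (simp flip: ennreal_plus add: power_add)
  finally show ?thesis .
qed

lemma null_limsup_exceptional: "limsup (exceptional G) \<in> null_sets lborel"
proof (rule borel_cantelli_limsup1)
  show "exceptional G k \<in> sets lborel" for k by (rule exceptional_sets)
  show "emeasure lborel (exceptional G k) < \<infinity>" for k
    using emeasure_exceptional_le[of G k] by (simp add: le_less_trans)
  have "measure lborel (exceptional G k) \<le> (1 / 2) ^ k" for k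
  proof -
    have "measure lborel (exceptional G k) \<le> 1 / 2 ^ (k + 1)"
      using emeasure_exceptional_le[of G k] unfolding measure_def by (intro enn2real_leI) auto
    also have "\<dots> \<le> (1 / 2) ^ k" by (simp add: power_divide frac_le)
    finally show ?thesis .
  qed
  then show "summable (\<lambda>k. measure lborel (exceptional G k))"
    by (intro summable_comparison_test'[OF summable_geometric[of "1 / 2 :: real"], where N = 0]) auto
qed

context
  fixes G :: "real set" and k :: nat and z :: int and m n :: nat and x :: real
  assumes z: "z \<in> grid G k" and m: "m \<le> qnum k"
    and near: "target_point k z m - eps k \<le> x + lam n" "x + lam n \<le> target_point k z m + 2 * eps k"
begin

lemma sparse_set_if_earlier_block:
  assumes "n < block_start k" "\<bar>x\<bar> \<le> radius k"
  shows "x \<in> sparse_set G k"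
proof -
  have "(z, m, n) \<in> sparse_index G k"
    unfolding sparse_index_def using assms z m near eps_le_mesh[of k] mesh_le[of k] by auto
  then show ?thesis using near unfolding sparse_set_def by force
qed

lemma in_open_if_long_step:
  assumes "block_start k \<le> n" "n < pivot k"
  shows "x \<in> G"
proof -
  define j where "j = pivot k - n"
  have "j \<le> long_steps k" "n = pivot k - j" using assms by (auto simp: j_def pivot_def)
  then have lam_n: "lam n = lam (pivot k) - real j * long_gap k" using lam_pivot_minus by simp
  have "real j * long_gap k \<le> real (long_steps k) * long_gap k"
    using \<open>j \<le> long_steps k\<close> long_gap_pos[of k] by (intro mult_right_mono) auto
  then have j: "0 \<le> real j * long_gap k" "real j * long_gap k \<le> 2 * mesh k + long_gap k"
    using long_gap_pos[of k] long_steps_upper[of k] by (simp, linarith)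
  have mq: "0 \<le> real m * short_gap k" "real m * short_gap k \<le> real (qnum k) * short_gap k"
    using short_gap_pos[of k] m by (auto intro: mult_right_mono)
  have "of_int z * mesh k - 2 * mesh k \<le> x"
    using near(1) lam_n j mq eps_le_mesh[of k] mesh_pos[of k] by (simp add: target_point_def)
  moreover have "x \<le> of_int z * mesh k + 4 * mesh k"
    using near(2) lam_n j mq grid_span_le[of k] by (simp add: target_point_def)
  ultimately show ?thesis using z by (auto simp: grid_def)
qed

lemma progression_set_if_short_step:
  assumes "pivot k \<le> n" "n \<le> pivot k + short_steps k" "\<bar>x\<bar> \<le> radius k"
  shows "x \<in> progression_set k"
proof -
  define i where "i = n - pivot k"
  have "i \<le> short_steps k" "n = pivot k + i" using assms by (auto simp: i_def)
  then have lam_n: "lam n = lam (pivot k) + real i * short_gap k" using lam_pivot_plus by simp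
  define t :: int where "t = z * int (mesh_ratio k) + int m - int i"
  have t: "of_int z * mesh k + real m * short_gap k - real i * short_gap k = of_int t * short_gap k"
    by (simp add: t_def mesh_eq_ratio_short_gap algebra_simps)
  have x: "of_int t * short_gap k - eps k \<le> x" "x \<le> of_int t * short_gap k + 2 * eps k"
    using near lam_n t by (simp_all add: target_point_def)
  then have "\<bar>of_int t\<bar> * short_gap k \<le> radius k + 1"
    using assms(3) eps_le_mesh[of k] mesh_le[of k] short_gap_pos[of k] by (simp add: abs_mult[symmetric])
  then show ?thesis using x unfolding progression_set_def progression_index_def by auto
qed

lemma not_beyond_short_steps:
  assumes "pivot k + short_steps k < n" "\<bar>x\<bar> \<le> radius k"
  shows False
proof -
  have "lam (pivot k + short_steps k) < lam n" using assms(1) strict_mono_lam by (simp add: strict_mono_less)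
  moreover have "lam (pivot k + short_steps k) = lam (pivot k) + real (short_steps k) * short_gap k"
    by (rule lam_pivot_plus) simp
  ultimately show False
    using near(2) short_steps_lower[of k] target_point_bounds(2)[OF z m] assms(2)
      eps_le_mesh[of k] mesh_le[of k] radius_ge1[of k] by linarith
qed

end

lemma exceptional_if_near_target:
  assumes x: "x \<notin> G" "\<bar>x\<bar> \<le> radius k" and near: "x + lam n \<in> target_nbhd G k"
  shows "x \<in> exceptional G k"
  using near
proof (rule target_nbhdE)
  fix z m assume zm: "z \<in> grid G k" "m \<le> qnum k"
    "target_point k z m - eps k \<le> x + lam n" "x + lam n \<le> target_point k z m + 2 * eps k"
  consider "n < block_start k" | "block_start k \<le> n" "n < pivot k"
    | "pivot k \<le> n" "n \<le> pivot k + short_steps k" | "pivot k + short_steps k < n"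
    by linarith
  then show ?thesis
    using sparse_set_if_earlier_block[OF zm] in_open_if_long_step[OF zm]
      progression_set_if_short_step[OF zm] not_beyond_short_steps[OF zm] x
    by cases (auto simp: exceptional_def)
qed

lemma shift_sum_finite_off_open:
  assumes x: "x \<notin> G" "x \<notin> limsup (exceptional G)"
    and f: "\<And>y. 0 \<le> f y" "\<And>y. f y \<noteq> 0 \<Longrightarrow> y \<in> (\<Union>k. target_nbhd G k)"
  shows "shift_sum f lam x \<noteq> \<infinity>"
proof -
  obtain k0 where k0: "\<And>k. k0 \<le> k \<Longrightarrow> x \<notin> exceptional G k"
    using x(2) by (auto simp: limsup_INF_SUP)
  obtain k1 :: nat where "\<bar>x\<bar> \<le> real k1" using real_arch_simple by blast
  define K where "K = max k0 k1"
  obtain N where N: "\<And>n. N \<le> n \<Longrightarrow> zone_lo K - x \<le> lam n"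
    using lam_at_top unfolding filterlim_at_top eventually_sequentially by blast
  have "f (x + lam n) = 0" if "N \<le> n" for n
  proof (rule ccontr)
    assume "f (x + lam n) \<noteq> 0"
    then obtain k where k: "x + lam n \<in> target_nbhd G k" using f(2) by blast
    have "k < K"
    proof (rule ccontr)
      assume "\<not> k < K"
      then have "\<bar>x\<bar> \<le> radius k" "k0 \<le> k" using \<open>\<bar>x\<bar> \<le> real k1\<close> by (auto simp: K_def radius_def)
      then show False using exceptional_if_near_target[OF x(1) _ k] k0 by blast
    qed
    then show False using zones_separated target_nbhd_in_zone[OF k] N[OF that] by fastforce
  qed
  then have "shift_sum f lam x = (\<Sum>n<N. ennreal (f (x + lam n)))"
    unfolding shift_sum_def by (intro suminf_finite) auto
  then show ?thesis by simp
qed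

lemma good_for_criterion:
  assumes G: "open G" and f: "\<And>y. 0 \<le> f y" "\<And>y. f y \<noteq> 0 \<Longrightarrow> y \<in> (\<Union>k. target_nbhd G k)"
    and c: "\<And>k y. y \<in> target G k \<Longrightarrow> c k \<le> f y" "\<And>k. 0 \<le> c k" "\<not> summable c"
  shows "good_for f lam G"
  unfolding good_for_def
proof
  have "{x. x \<notin> G \<and> shift_sum f lam x = \<infinity>} \<subseteq> limsup (exceptional G)"
    using shift_sum_finite_off_open[of _ G f] f by blast
  then show "{x. x \<notin> G \<and> shift_sum f lam x = \<infinity>} \<in> null_sets lebesgue"
    using null_sets_completionI[OF null_limsup_exceptional] by (rule null_sets_completion_subset)
  show "\<forall>x\<in>G. shift_sum f lam x = \<infinity>"
    using shift_sum_infinite_on_open[of G _ c f] G c by blast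
qed

lemma good_for_indicator_targets: "open G \<Longrightarrow> good_for (indicator (\<Union>k. target G k)) lam G"
  by (rule good_for_criterion[where c = "\<lambda>_. 1"])
    (use target_subset_nbhd in \<open>auto simp: indicator_def summable_const_iff split: if_splits\<close>)

lemma target_abs_le: "y \<in> target G k \<Longrightarrow> 1 + \<bar>y\<bar> \<le> (5 * (real k + 1))\<^sup>2"
proof -
  assume "y \<in> target G k"
  then have "zone_lo k \<le> y" "y \<le> zone_hi k" using target_nbhd_in_zone target_subset_nbhd by blast+
  then have "\<bar>y\<bar> \<le> 15 * (real k + 1)\<^sup>2 + real k + 5"
    using lam_nonneg[of "pivot k"] lam_pivot_le[of k] by (simp add: zone_lo_def zone_hi_def radius_def)
  moreover have "real k + 1 \<le> (real k + 1)\<^sup>2" by (simp add: power2_eq_square)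
  moreover have "(5 * (real k + 1))\<^sup>2 = 25 * (real k + 1)\<^sup>2" unfolding power_mult_distrib by simp
  ultimately show ?thesis by linarith
qed

lemma not_summable_harmonic_scaled: "\<not> summable (\<lambda>k. 1 / (5 * (real k + 1)))"
proof -
  have "(\<lambda>k. 1 / (5 * (real k + 1))) = (\<lambda>k. 1 / 5 * inverse (real (Suc k)))"
    by (simp add: fun_eq_iff field_simps)
  then show ?thesis
    using summable_Suc_iff[of "\<lambda>k. inverse (real k)"] not_summable_harmonic[where 'a = real] by simp
qed

lemma good_for_damped_targets:
  assumes G: "open G" and g: "\<And>y. 0 \<le> g y" "\<And>y. g y \<noteq> 0 \<Longrightarrow> y \<in> (\<Union>k. target_nbhd G k)"
    "\<And>y. y \<in> (\<Union>k. target G k) \<Longrightarrow> g y = 1 / sqrt (1 + \<bar>y\<bar>)"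
  shows "good_for g lam G"
proof (rule good_for_criterion[where c = "\<lambda>k. 1 / (5 * (real k + 1))"])
  fix k y assume y: "y \<in> target G k"
  have "sqrt (1 + \<bar>y\<bar>) \<le> 5 * (real k + 1)"
    using real_sqrt_le_mono[OF target_abs_le[OF y]] by simp
  moreover have "g y = 1 / sqrt (1 + \<bar>y\<bar>)" using g(3) y by blast
  ultimately show "1 / (5 * (real k + 1)) \<le> g y" by (simp add: frac_le)
qed (use G g(1,2) not_summable_harmonic_scaled in auto)

theorem theorem2p1:
  shows "\<exists>lam :: nat \<Rightarrow> real.
     strict_mono lam \<and> filterlim lam at_top sequentially \<and>
     decseq (\<lambda>n. lam (Suc n) - lam n) \<and> (\<lambda>n. lam (Suc n) - lam n) \<longlonglongrightarrow> 0 \<and>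
     (\<forall>G :: real set. open G \<longrightarrow>
        (\<exists>U. closed U \<and> good_for (indicator U) lam G) \<and>
        (\<exists>g :: real \<Rightarrow> real. continuous_on UNIV g \<and> (\<forall>x. 0 \<le> g x) \<and>
             (g \<longlongrightarrow> 0) at_top \<and> good_for g lam G))"
proof (intro exI[of _ lam] conjI allI impI)
  show "strict_mono lam" by (rule strict_mono_lam)
  show "filterlim lam at_top sequentially" by (rule lam_at_top)
  show "decseq (\<lambda>n. lam (Suc n) - lam n)" by (simp add: lam_Suc decseq_gap)
  show "(\<lambda>n. lam (Suc n) - lam n) \<longlonglongrightarrow> 0" by (simp add: lam_Suc gap_tendsto_zero)
  fix G :: "real set"
  assume G: "open G"
  show "\<exists>U. closed U \<and> good_for (indicator U) lam G"
    using closed_targets good_for_indicator_targets[OF G] by blast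
  obtain g where g: "continuous_on UNIV g" "\<And>y. 0 \<le> g y" "(g \<longlongrightarrow> 0) at_top"
    and on_targets: "\<And>y. y \<in> (\<Union>k. target G k) \<Longrightarrow> g y = 1 / sqrt (1 + \<bar>y\<bar>)"
    and support: "\<And>y. g y \<noteq> 0 \<Longrightarrow> y \<in> (\<Union>k. target_nbhd G k)"
    by (rule continuous_damped_urysohn[OF closed_targets[of G] open_target_nbhds[of G]
          targets_subset_nbhds[of G]]) auto
  have "good_for g lam G" by (rule good_for_damped_targets[OF G g(2) support on_targets])
  with g show "\<exists>g :: real \<Rightarrow> real. continuous_on UNIV g \<and> (\<forall>x. 0 \<le> g x) \<and>
      (g \<longlongrightarrow> 0) at_top \<and> good_for g lam G"
    by blast
qed

end
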